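(* Let $V$ and $V^+$ be as in the setup below and, for $1\le i\le n$, let $z_i:V^+\to V^+$ be a bijective highest central operator of degree $M_ie_i$ ($M_i\in\mathbb Z$, $e_i$ the $i$-th standard basis vector of $\mathbb Z^n$). Define $T_i:V^+\to V^+$ by $T_i(z_iv)=v$ for all $v\in V^+$, and $W=\operatorname{Span}_{\mathbb C}\{z_iv-v\mid v\in V^+,\ 1\le i\le n\}$. Then: (1) $T_iz_i=\mathrm{Id}$; (2) $[T_i,H\otimes\mathbb C_q]=0$; (3) $T_iv-v\in W$ for all $v\in V^+$; (4) $T_i^kv-v\in W$ for all $k\ge1$, $v\in V^+$; (5) $z_i^kv-v\in W$ for all $k\ge1$, $v\in V^+$.
   Context: Fix integers $n\ge2$, $d\ge2$. Let $q=(q_{ij})_{1\le i,j\le n}$ with $q_{ij}\in\mathbb C^\times$ roots of unity, $q_{ii}=1$, $q_{ij}=q_{ji}^{-1}$. The rational quantum torus $\mathbb C_q$ is generated by $t_1^{\pm1},\dots,t_n^{\pm1}$ with $t_it_i^{-1}=t_i^{-1}t_i=1$, $t_it_j=q_{ij}t_jt_i$; $t^a=t_1^{a_1}\cdots t_n^{a_n}$, $t^at^b=f(a,b)t^bt^a$ with $f(a,b)=\prod_{i,j}q_{ji}^{a_jb_i}$, $\operatorname{rad}f=\{a: f(a,b)=1\ \forall b\}$; $Z(\mathbb C_q)$ is spanned by $t^a$, $a\in\operatorname{rad}f$. $\tau(d,q)=\mathfrak{sl}_d(\mathbb C_q)$: $d\times d$ matrices over $\mathbb C_q$ with trace in $[\mathbb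 C_q,\mathbb C_q]$, commutator bracket. With $J\subset\mathbb C_q\otimes\mathbb C_q$ spanned by $x\otimes y+y\otimes x$, $xy\otimes z+yz\otimes x+zx\otimes y$, let $\langle t^a,t^b\rangle$ ($a+b\in\operatorname{rad}f$) be the image of $t^a\otimes t^b$ modulo $J$, $HC_1(\mathbb C_q)$ their span; $\tilde\tau(d,q)=\tau(d,q)\oplus HC_1(\mathbb C_q)$ with $HC_1$ central and $[X\otimes t^a,Y\otimes t^b]=(XY\otimes t^at^b-YX\otimes t^bt^a)+\mathrm{Tr}(XY)\langle t^a,t^b\rangle$ if $a+b\in\operatorname{rad}f$ (no last term otherwise); $\hat\tau(d,q)=\tilde\tau(d,q)\oplus D$, $D=\bigoplus_i\mathbb Cd_i$, $[d_i,d_j]=0$, $[d_i,X\otimes t^a]=a_iX\otimes t^a$, $[d_i,\langle t^a,t^b\rangle]=(a_i+b_i)\langle t^a,t^b\rangle$. Integrable: direct sum of weight spaces for $\mathfrak h=\dot{\mathfrak h}\oplus\bigoplus\mathbb C\langle t_i,t_i^{-1}\rangle\oplus\bigoplus\mathbb Cd_i$ ($\dot{\mathfrak h}$ = trace-zero diagonal matrices) and each $x_\alpha\otimes t^m$ ($x_\alpha$ a root vector of $\mathfrak{sl}_d(\mathbb C)$) acts locally nilpotently. Setup: $V$ is an irreducible integrable $\hat\tau(d,q)$-module with finite-dimensional weight spaces on which $HC_1(\mathbb C_q)$ acts trivially, regarded as a module over $(\mathfrak{gl}_d(\mathbb C)\otimes\mathbb C_q)\oplus D$ via $\mathfrak{gl}_d(\mathbb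 C)\otimes\mathbb C_q=\mathfrak{sl}_d(\mathbb C_q)\oplus(I_d\otimes Z(\mathbb C_q))$ with $I_d\otimes Z(\mathbb C_q)$ acting by zero. $H$ = diagonal matrices in $\mathfrak{gl}_d(\mathbb C)$, $N^+$ = strictly upper triangular matrices, $V^+=\{v\in V:(N^+\otimes\mathbb C_q)v=0\}$. A highest central operator of degree $m\in\mathbb Z^n$ is a linear map $z:V^+\to V^+$ commuting with the action of $H\otimes\mathbb C_q$ with $d_iz-zd_i=m_iz$ for all $i$. *)

theory Defs
  imports Complex_Main
begin

text \<open>Lattice Z^n, realised as integer functions on nat supported in {0..<n}
  (index i corresponds to t_(i+1) of the paper).\<close>
definition Zn :: "nat \<Rightarrow> (nat \<Rightarrow> int) set" where
  "Zn n = {a. \<forall>i\<ge>n. a i = 0}"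

definition unitvec :: "nat \<Rightarrow> nat \<Rightarrow> int" where
  "unitvec i = (\<lambda>k. if k = i then 1 else 0)"

definition is_root_of_unity :: "complex \<Rightarrow> bool" where
  "is_root_of_unity z \<longleftrightarrow> (\<exists>k::nat. k > 0 \<and> z ^ k = 1)"

definition qtorus_params :: "nat \<Rightarrow> (nat \<Rightarrow> nat \<Rightarrow> complex) \<Rightarrow> bool" where
  "qtorus_params n q \<longleftrightarrow>
     (\<forall>i<n. \<forall>j<n. is_root_of_unity (q i j) \<and> q j i = inverse (q i j)) \<and> (\<forall>i<n. q i i = 1)"

text \<open>Multiplication in C_q: t^a t^b = qcoc n q a b * t^(a+b), where
  t^a = t_1^(a_1) ... t_n^(a_n).\<close>
definition qcoc :: "nat \<Rightarrow> (nat \<Rightarrow> nat \<Rightarrow> complex) \<Rightarrow> (nat \<Rightarrow> int) \<Rightarrow> (nat \<Rightarrow> int) \<Rightarrow> complex" where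
  "qcoc n q a b = (\<Prod>i<n. \<Prod>j<i. q i j powi (a i * b j))"

text \<open>f(a,b) with t^a t^b = f(a,b) t^b t^a, and its radical.\<close>
definition fq :: "nat \<Rightarrow> (nat \<Rightarrow> nat \<Rightarrow> complex) \<Rightarrow> (nat \<Rightarrow> int) \<Rightarrow> (nat \<Rightarrow> int) \<Rightarrow> complex" where
  "fq n q a b = (\<Prod>i<n. \<Prod>j<n. q j i powi (a j * b i))"

definition radf :: "nat \<Rightarrow> (nat \<Rightarrow> nat \<Rightarrow> complex) \<Rightarrow> (nat \<Rightarrow> int) set" where
  "radf n q = {a \<in> Zn n. \<forall>b\<in>Zn n. fq n q a b = 1}"

text \<open>A module over (gl_d(C) \<otimes> C_q) \<oplus> D on the complex vector space ('v, sc) is given by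
  the actions E i j a of the basis elements E_ij \<otimes> t^a (i,j<d, a\<in>Z^n) and D k of d_k (k<n).\<close>

text \<open>Weight spaces for h = trace-zero diagonal matrices \<oplus> span <t_i,t_i^-1> \<oplus> D;
  the elements <t_i,t_i^-1> of HC_1 act trivially, so their weight component is 0.
  A weight of the trace-zero diagonal part is recorded by lam modulo constants.\<close>
definition wspace :: "nat \<Rightarrow> nat \<Rightarrow> (complex \<Rightarrow> 'v::ab_group_add \<Rightarrow> 'v)
    \<Rightarrow> (nat \<Rightarrow> nat \<Rightarrow> (nat \<Rightarrow> int) \<Rightarrow> 'v \<Rightarrow> 'v) \<Rightarrow> (nat \<Rightarrow> 'v \<Rightarrow> 'v)
    \<Rightarrow> (nat \<Rightarrow> complex) \<Rightarrow> (nat \<Rightarrow> complex) \<Rightarrow> 'v set" where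
  "wspace n d sc E D lam mu =
     {v. (\<forall>i<d. \<forall>j<d. E i i (\<lambda>_. 0) v - E j j (\<lambda>_. 0) v = sc (lam i - lam j) v) \<and>
         (\<forall>k<n. D k v = sc (mu k) v)}"

definition irr_int_module :: "nat \<Rightarrow> nat \<Rightarrow> (nat \<Rightarrow> nat \<Rightarrow> complex) \<Rightarrow> (complex \<Rightarrow> 'v::ab_group_add \<Rightarrow> 'v)
    \<Rightarrow> (nat \<Rightarrow> nat \<Rightarrow> (nat \<Rightarrow> int) \<Rightarrow> 'v \<Rightarrow> 'v) \<Rightarrow> (nat \<Rightarrow> 'v \<Rightarrow> 'v) \<Rightarrow> bool" where
  "irr_int_module n d q sc E D \<longleftrightarrow>
     vector_space sc \<and>
     (\<forall>i<d. \<forall>j<d. \<forall>a\<in>Zn n. Vector_Spaces.linear sc sc (E i j a)) \<and>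
     (\<forall>k<n. Vector_Spaces.linear sc sc (D k)) \<and>
     \<comment> \<open>bracket of gl_d(C_q) (the central HC_1 term acts trivially)\<close>
     (\<forall>i<d. \<forall>j<d. \<forall>k<d. \<forall>l<d. \<forall>a\<in>Zn n. \<forall>b\<in>Zn n. \<forall>v.
        E i j a (E k l b v) - E k l b (E i j a v) =
          (if j = k then sc (qcoc n q a b) (E i l (\<lambda>x. a x + b x) v) else 0)
        - (if l = i then sc (qcoc n q b a) (E k j (\<lambda>x. a x + b x) v) else 0)) \<and>
     (\<forall>k<n. \<forall>l<n. \<forall>v. D k (D l v) = D l (D k v)) \<and>
     (\<forall>k<n. \<forall>i<d. \<forall>j<d. \<forall>a\<in>Zn n. \<forall>v.
        D k (E i j a v) - E i j a (D k v) = sc (of_int (a k)) (E i j a v)) \<and>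
     \<comment> \<open>I_d \<otimes> Z(C_q) acts by zero\<close>
     (\<forall>a\<in>radf n q. \<forall>v. (\<Sum>i<d. E i i a v) = 0) \<and>
     \<comment> \<open>direct sum of weight spaces (sums of simultaneous eigenspaces are automatically direct)\<close>
     UNIV \<subseteq> module.span sc (\<Union>lam. \<Union>mu. wspace n d sc E D lam mu) \<and>
     \<comment> \<open>finite-dimensional weight spaces\<close>
     (\<forall>lam mu. \<exists>B. finite B \<and> wspace n d sc E D lam mu \<subseteq> module.span sc B) \<and>
     \<comment> \<open>root vectors x_alpha \<otimes> t^m act locally nilpotently\<close>
     (\<forall>i<d. \<forall>j<d. i \<noteq> j \<longrightarrow> (\<forall>a\<in>Zn n. \<forall>v. \<exists>k. (E i j a ^^ k) v = 0)) \<and>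
     \<comment> \<open>irreducible\<close>
     (\<exists>v::'v. v \<noteq> 0) \<and>
     (\<forall>U. module.subspace sc U \<and>
          (\<forall>i<d. \<forall>j<d. \<forall>a\<in>Zn n. \<forall>v\<in>U. E i j a v \<in> U) \<and>
          (\<forall>k<n. \<forall>v\<in>U. D k v \<in> U)
        \<longrightarrow> U = {0} \<or> U = UNIV)"

definition Vplus :: "nat \<Rightarrow> nat \<Rightarrow> (nat \<Rightarrow> nat \<Rightarrow> (nat \<Rightarrow> int) \<Rightarrow> 'v::zero \<Rightarrow> 'v) \<Rightarrow> 'v set" where
  "Vplus n d E = {v. \<forall>i<d. \<forall>j<d. i < j \<longrightarrow> (\<forall>a\<in>Zn n. E i j a v = 0)}"

definition highest_central_op :: "nat \<Rightarrow> nat \<Rightarrow> (complex \<Rightarrow> 'v::ab_group_add \<Rightarrow> 'v)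
    \<Rightarrow> (nat \<Rightarrow> nat \<Rightarrow> (nat \<Rightarrow> int) \<Rightarrow> 'v \<Rightarrow> 'v) \<Rightarrow> (nat \<Rightarrow> 'v \<Rightarrow> 'v)
    \<Rightarrow> (nat \<Rightarrow> int) \<Rightarrow> ('v \<Rightarrow> 'v) \<Rightarrow> bool" where
  "highest_central_op n d sc E D m z \<longleftrightarrow>
     z ` Vplus n d E \<subseteq> Vplus n d E \<and>
     (\<forall>u\<in>Vplus n d E. \<forall>v\<in>Vplus n d E. z (u + v) = z u + z v) \<and>
     (\<forall>c. \<forall>v\<in>Vplus n d E. z (sc c v) = sc c (z v)) \<and>
     (\<forall>i<d. \<forall>a\<in>Zn n. \<forall>v\<in>Vplus n d E. z (E i i a v) = E i i a (z v)) \<and>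
     (\<forall>k<n. \<forall>v\<in>Vplus n d E. D k (z v) - z (D k v) = sc (of_int (m k)) (z v))"

end

theory Submission
  imports Defs
begin

text \<open>The diagonal operators E_jj(t^a) preserve V^+ because their brackets with the raising
  operators E_ik(t^b), i < k, are again raising operators. Since each z_i is a bijection of
  V^+ commuting with them, so is its inverse T_i. Finally W is a subspace containing
  z_i v - v, hence also T_i v - v = -(z_i (T_i v) - T_i v), and telescoping sums give
  the statements for the powers of z_i and T_i.\<close>

lemma Zn_add: "a \<in> Zn n \<Longrightarrow> b \<in> Zn n \<Longrightarrow> (\<lambda>x. a x + b x) \<in> Zn n"
  unfolding Zn_def by auto

lemma irr_int_module_vector_space: "irr_int_module n d q sc E D \<Longrightarrow> vector_space sc"
  unfolding irr_int_module_def by blast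

lemma irr_int_module_zero:
  assumes "irr_int_module n d q sc E D" "i < d" "j < d" "a \<in> Zn n"
  shows "E i j a 0 = 0"
proof -
  have "\<forall>i<d. \<forall>j<d. \<forall>a\<in>Zn n. Vector_Spaces.linear sc sc (E i j a)"
    using assms(1) unfolding irr_int_module_def by (elim conjE)
  then have "module_hom sc sc (E i j a)" using assms(2-4) module_hom_iff_linear by blast
  then show ?thesis by (rule module_hom.zero)
qed

lemma irr_int_module_bracket:
  assumes "irr_int_module n d q sc E D" "i < d" "j < d" "k < d" "l < d" "a \<in> Zn n" "b \<in> Zn n"
  shows "E i j a (E k l b v) - E k l b (E i j a v) =
          (if j = k then sc (qcoc n q a b) (E i l (\<lambda>x. a x + b x) v) else 0)
        - (if l = i then sc (qcoc n q b a) (E k j (\<lambda>x. a x + b x) v) else 0)"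
proof -
  have "\<forall>i<d. \<forall>j<d. \<forall>k<d. \<forall>l<d. \<forall>a\<in>Zn n. \<forall>b\<in>Zn n. \<forall>v.
        E i j a (E k l b v) - E k l b (E i j a v) =
          (if j = k then sc (qcoc n q a b) (E i l (\<lambda>x. a x + b x) v) else 0)
        - (if l = i then sc (qcoc n q b a) (E k j (\<lambda>x. a x + b x) v) else 0)"
    using assms(1) unfolding irr_int_module_def by (elim conjE)
  then show ?thesis using assms(2-7) by blast
qed

lemma Vplus_closed_diag:
  assumes module: "irr_int_module n d q sc E D"
    and "j < d" "a \<in> Zn n" and v: "v \<in> Vplus n d E"
  shows "E j j a v \<in> Vplus n d E"
  unfolding Vplus_def
proof (intro CollectI allI impI ballI)
  interpret vector_space sc using module by (rule irr_int_module_vector_space)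
  fix i k b assume ik: "i < d" "k < d" "i < k" "b \<in> Zn n"
  have raise_v: "E i l c v = 0" if "l < d" "i < l" "c \<in> Zn n" for l c
    using v that ik(1) unfolding Vplus_def by blast
  have "E i k b (E j j a v) - E j j a (E i k b v) =
          (if k = j then sc (qcoc n q b a) (E i j (\<lambda>x. b x + a x) v) else 0)
        - (if j = i then sc (qcoc n q a b) (E j k (\<lambda>x. b x + a x) v) else 0)"
    using irr_int_module_bracket[OF module, of i k j j b a v] ik assms(2,3) by simp
  also have "\<dots> = 0"
    using raise_v[of j "\<lambda>x. b x + a x"] raise_v[of k "\<lambda>x. b x + a x"]
      Zn_add[OF ik(4) assms(3)] ik by auto
  finally show "E i k b (E j j a v) = 0"
    using raise_v[OF ik(2,3,4)] irr_int_module_zero[OF module assms(2,2,3)] by simp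
qed

lemma surj_on_left_inverse:
  assumes "S \<subseteq> f ` S" and "\<And>v. v \<in> S \<Longrightarrow> g (f v) = v" and "v \<in> S"
  shows "g v \<in> S" and "f (g v) = v"
  using assms by auto

lemma left_inverse_commute:
  assumes "S \<subseteq> f ` S" and "\<And>v. v \<in> S \<Longrightarrow> g (f v) = v"
    and "\<And>v. v \<in> S \<Longrightarrow> h v \<in> S" and "\<And>v. v \<in> S \<Longrightarrow> f (h v) = h (f v)"
    and "v \<in> S"
  shows "g (h v) = h (g v)"
proof -
  obtain w where w: "w \<in> S" "v = f w" using assms(1,5) by blast
  then have "g (h v) = g (f (h w))" using assms(4) by simp
  also have "\<dots> = h w" using assms(2,3) w(1) by simp
  also have "\<dots> = h (g v)" using assms(2) w by simp
  finally show ?thesis .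
qed

context module
begin

lemma left_inverse_minus_in_subspace:
  assumes "subspace U" and "f (g v) - g v \<in> U" and "f (g v) = v"
  shows "g v - v \<in> U"
  using subspace_neg[OF assms(1,2)] assms(3) by simp

lemma funpow_minus_in_subspace:
  assumes "subspace U" and "\<And>v. v \<in> S \<Longrightarrow> f v \<in> S" and "\<And>v. v \<in> S \<Longrightarrow> f v - v \<in> U"
    and "v \<in> S"
  shows "(f ^^ k) v - v \<in> U"
proof (induction k)
  case 0
  then show ?case using subspace_0[OF assms(1)] by simp
next
  case (Suc k)
  have "(f ^^ k) v \<in> S" using assms(2,4) by (induction k) auto
  then have "(f (((f ^^ k) v)) - (f ^^ k) v) + ((f ^^ k) v - v) \<in> U"
    using subspace_add[OF assms(1)] assms(3) Suc.IH by blast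
  then show ?case by simp
qed

end

theorem lemma5p14:
  fixes n d :: nat and q :: "nat \<Rightarrow> nat \<Rightarrow> complex"
    and sc :: "complex \<Rightarrow> 'v::ab_group_add \<Rightarrow> 'v"
    and E :: "nat \<Rightarrow> nat \<Rightarrow> (nat \<Rightarrow> int) \<Rightarrow> 'v \<Rightarrow> 'v" and D :: "nat \<Rightarrow> 'v \<Rightarrow> 'v"
    and M :: "nat \<Rightarrow> int" and z T :: "nat \<Rightarrow> 'v \<Rightarrow> 'v"
  assumes "n \<ge> 2" and "d \<ge> 2"
    and "qtorus_params n q"
    and "irr_int_module n d q sc E D"
    and "\<forall>i<n. highest_central_op n d sc E D (\<lambda>k. M i * unitvec i k) (z i)
               \<and> bij_betw (z i) (Vplus n d E) (Vplus n d E)"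
    and "\<forall>i<n. \<forall>v\<in>Vplus n d E. T i (z i v) = v"
  shows "\<forall>i<n.
     (\<forall>v\<in>Vplus n d E. T i (z i v) = v) \<and>
     (\<forall>j<d. \<forall>a\<in>Zn n. \<forall>v\<in>Vplus n d E. T i (E j j a v) = E j j a (T i v)) \<and>
     (\<forall>v\<in>Vplus n d E. T i v - v \<in> module.span sc {z l w - w | l w. l < n \<and> w \<in> Vplus n d E}) \<and>
     (\<forall>k\<ge>1. \<forall>v\<in>Vplus n d E. (T i ^^ k) v - v \<in> module.span sc {z l w - w | l w. l < n \<and> w \<in> Vplus n d E}) \<and>
     (\<forall>k\<ge>1. \<forall>v\<in>Vplus n d E. (z i ^^ k) v - v \<in> module.span sc {z l w - w | l w. l < n \<and> w \<in> Vplus n d E})"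
proof (intro allI impI)
  fix i assume "i < n"
  interpret vector_space sc using assms(4) by (rule irr_int_module_vector_space)
  let ?V = "Vplus n d E" and ?W = "span {z l w - w | l w. l < n \<and> w \<in> Vplus n d E}"
  have bij: "bij_betw (z i) ?V ?V" and central: "highest_central_op n d sc E D (\<lambda>k. M i * unitvec i k) (z i)"
    and Tz: "\<And>v. v \<in> ?V \<Longrightarrow> T i (z i v) = v" using assms(5,6) \<open>i < n\<close> by auto
  have surj: "?V \<subseteq> z i ` ?V" and zV: "\<And>v. v \<in> ?V \<Longrightarrow> z i v \<in> ?V"
    using bij bij_betw_imp_surj_on bij_betwE by blast+
  have TV: "\<And>v. v \<in> ?V \<Longrightarrow> T i v \<in> ?V" and zT: "\<And>v. v \<in> ?V \<Longrightarrow> z i (T i v) = v"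
    using surj_on_left_inverse[OF surj Tz] by blast+
  have zW: "\<And>v. v \<in> ?V \<Longrightarrow> z i v - v \<in> ?W" using \<open>i < n\<close> by (blast intro: span_base)
  have TW: "T i v - v \<in> ?W" if "v \<in> ?V" for v
    using subspace_span zW[OF TV[OF that]] zT[OF that] by (rule left_inverse_minus_in_subspace)
  have "T i (E j j a v) = E j j a (T i v)" if "j < d" "a \<in> Zn n" "v \<in> ?V" for j a v
  proof -
    have "z i (E j j a w) = E j j a (z i w)" if "w \<in> ?V" for w
      using central \<open>j < d\<close> \<open>a \<in> Zn n\<close> that unfolding highest_central_op_def by blast
    with surj Tz Vplus_closed_diag[OF assms(4) that(1,2)] show ?thesis
      using \<open>v \<in> ?V\<close> by (rule left_inverse_commute)
  qed
  moreover have "(T i ^^ k) v - v \<in> ?W" if "v \<in> ?V" for k v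
    using subspace_span TV TW that by (rule funpow_minus_in_subspace)
  moreover have "(z i ^^ k) v - v \<in> ?W" if "v \<in> ?V" for k v
    using subspace_span zV zW that by (rule funpow_minus_in_subspace)
  ultimately show "(\<forall>v\<in>?V. T i (z i v) = v) \<and> (\<forall>j<d. \<forall>a\<in>Zn n. \<forall>v\<in>?V. T i (E j j a v) = E j j a (T i v)) \<and>
      (\<forall>v\<in>?V. T i v - v \<in> ?W) \<and> (\<forall>k\<ge>1. \<forall>v\<in>?V. (T i ^^ k) v - v \<in> ?W) \<and>
      (\<forall>k\<ge>1. \<forall>v\<in>?V. (z i ^^ k) v - v \<in> ?W)"
    using Tz TW by blast
qed

end
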